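(* (1) For every $\phi\in\mathcal{L}_{\Box\!\!\rightarrow}$, if $\phi\in\mathsf{N4CK}$, then $\phi\in\mathsf{CK}$. (2) The classical system $\mathbb{CK}$ (axiomatizing $\mathsf{CK}$) and the system $\mathbb{N}4\mathbb{CK}$ extended with the axiom schemes $\phi\to(\sim\phi\to\psi)$ and $\phi\vee\sim\phi$ generate the same logic over $\mathcal{L}_{\Box\!\!\rightarrow}$ when both are closed under the operation $^\iota$.
   Context: $\mathcal{L}_{\Box\!\!\rightarrow}$ is built from propositional variables with $\wedge,\vee,\to$, negation $\sim$, and a binary would-conditional $\Box\!\!\rightarrow$; $\phi\Diamond\!\!\rightarrow\psi$ abbreviates $\sim(\phi\Box\!\!\rightarrow\sim\psi)$. Abbreviations: $\leftrightarrow$ is mutual $\to$; $\phi\Rightarrow\psi:=(\phi\to\psi)\wedge(\sim\psi\to\sim\phi)$; $\phi\Leftrightarrow\psi:=(\phi\Rightarrow\psi)\wedge(\psi\Rightarrow\phi)$. Consider the axioms (A1) $((\phi\Box\!\!\rightarrow\psi)\wedge(\phi\Box\!\!\rightarrow\chi))\Leftrightarrow(\phi\Box\!\!\rightarrow(\psi\wedge\chi))$; (A2) $(\sim(\phi\Box\!\!\rightarrow\psi)\wedge(\phi\Box\!\!\rightarrow\chi))\to\sim(\phi\Box\!\!\rightarrow(\psi\vee\sim\chi))$; (A3) $((\phi\Diamond\!\!\rightarrow\psi)\to(\phi\Box\!\!\rightarrow\chi))\to(\phi\Box\!\!\rightarrow(\psi\to\chi))$; (A4) $\phi\Box\!\!\rightarrow(\psi\to\psi)$;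 and rules (RA) from $\phi\Leftrightarrow\psi$ infer $(\phi\Box\!\!\rightarrow\chi)\Leftrightarrow(\psi\Box\!\!\rightarrow\chi)$; (RC1) from $\phi\leftrightarrow\psi$ infer $(\chi\Box\!\!\rightarrow\phi)\leftrightarrow(\chi\Box\!\!\rightarrow\psi)$; (RC2) from $\sim\phi\leftrightarrow\sim\psi$ infer $\sim(\chi\Box\!\!\rightarrow\phi)\leftrightarrow\sim(\chi\Box\!\!\rightarrow\psi)$. $\mathbb{N}4\mathbb{CK}$ = modus ponens + positive intuitionistic schemes + $\sim\sim\phi\leftrightarrow\phi$, $\sim(\phi\wedge\psi)\leftrightarrow(\sim\phi\vee\sim\psi)$, $\sim(\phi\vee\psi)\leftrightarrow(\sim\phi\wedge\sim\psi)$, $\sim(\phi\to\psi)\leftrightarrow(\phi\wedge\sim\psi)$ + (A1)–(A4) + (RA),(RC1),(RC2); it is sound and complete for $\mathsf{N4CK}$, the paraconsistent Nelsonian conditional logic. $\mathsf{CK}$ is Chellas' basic classical conditional logic, axiomatized by $\mathbb{CK}$ := classical propositional logic (with $\sim$ as classical negation) + (A1), (A4), (RA), (RC1). For a system $\mathbb{S}$, $\Gamma\vdash_\mathbb{S}\Delta$ means some nonempty finite disjunction of members of $\Delta$ is derivable from $\Gamma$ and theorems by modus ponens, and $\mathbb{S}^\iota[\mathcal{L}_{\Box\!\!\rightarrow}]$ is the resulting relation extended by all pairs $(\Gamma,\emptyset)$ such that $\Gamma\vdash_\mathbb{S}p_1\wedge\sim p_1$. *)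

theory Defs
  imports Main
begin

datatype fm =
    Var nat
  | Conj fm fm
  | Disj fm fm
  | Imp fm fm
  | Neg fm          (* strong negation ~ *)
  | Cond fm fm

definition Iff :: "fm \<Rightarrow> fm \<Rightarrow> fm" where
  "Iff a b = Conj (Imp a b) (Imp b a)"

definition SImp :: "fm \<Rightarrow> fm \<Rightarrow> fm" where
  "SImp a b = Conj (Imp a b) (Imp (Neg b) (Neg a))"

definition SIff :: "fm \<Rightarrow> fm \<Rightarrow> fm" where
  "SIff a b = Conj (SImp a b) (SImp b a)"

definition Might :: "fm \<Rightarrow> fm \<Rightarrow> fm" where
  "Might a b = Neg (Cond a (Neg b))"

inductive pos_ax :: "fm \<Rightarrow> bool" where
  K:  "pos_ax (Imp a (Imp b a))"
| S:  "pos_ax (Imp (Imp a (Imp b c)) (Imp (Imp a b) (Imp a c)))"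
| C1: "pos_ax (Imp (Conj a b) a)"
| C2: "pos_ax (Imp (Conj a b) b)"
| CI: "pos_ax (Imp a (Imp b (Conj a b)))"
| D1: "pos_ax (Imp a (Disj a b))"
| D2: "pos_ax (Imp b (Disj a b))"
| DE: "pos_ax (Imp (Imp a c) (Imp (Imp b c) (Imp (Disj a b) c)))"

inductive neg_ax :: "fm \<Rightarrow> bool" where
  "neg_ax (Iff (Neg (Neg a)) a)"
| "neg_ax (Iff (Neg (Conj a b)) (Disj (Neg a) (Neg b)))"
| "neg_ax (Iff (Neg (Disj a b)) (Conj (Neg a) (Neg b)))"
| "neg_ax (Iff (Neg (Imp a b)) (Conj a (Neg b)))"

definition A1 :: "fm \<Rightarrow> bool" where
  "A1 f \<longleftrightarrow> (\<exists>a b c. f = SIff (Conj (Cond a b) (Cond a c)) (Cond a (Conj b c)))"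

definition A2 :: "fm \<Rightarrow> bool" where
  "A2 f \<longleftrightarrow> (\<exists>a b c. f = Imp (Conj (Neg (Cond a b)) (Cond a c))
                                   (Neg (Cond a (Disj b (Neg c)))))"

definition A3 :: "fm \<Rightarrow> bool" where
  "A3 f \<longleftrightarrow> (\<exists>a b c. f = Imp (Imp (Might a b) (Cond a c)) (Cond a (Imp b c)))"

definition A4 :: "fm \<Rightarrow> bool" where
  "A4 f \<longleftrightarrow> (\<exists>a b. f = Cond a (Imp b b))"

inductive n4ck :: "fm set \<Rightarrow> fm \<Rightarrow> bool" for E :: "fm set" where
  ax_pos: "pos_ax f \<Longrightarrow> n4ck E f"
| ax_neg: "neg_ax f \<Longrightarrow> n4ck E f"
| ax_A1: "A1 f \<Longrightarrow> n4ck E f"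
| ax_A2: "A2 f \<Longrightarrow> n4ck E f"
| ax_A3: "A3 f \<Longrightarrow> n4ck E f"
| ax_A4: "A4 f \<Longrightarrow> n4ck E f"
| ax_extra: "f \<in> E \<Longrightarrow> n4ck E f"
| MP: "n4ck E (Imp a b) \<Longrightarrow> n4ck E a \<Longrightarrow> n4ck E b"
| RA: "n4ck E (SIff a b) \<Longrightarrow> n4ck E (SIff (Cond a c) (Cond b c))"
| RC1: "n4ck E (Iff a b) \<Longrightarrow> n4ck E (Iff (Cond c a) (Cond c b))"
| RC2: "n4ck E (Iff (Neg a) (Neg b)) \<Longrightarrow> n4ck E (Iff (Neg (Cond c a)) (Neg (Cond c b)))"

abbreviation N4CK :: "fm \<Rightarrow> bool" where "N4CK \<equiv> n4ck {}"

definition classical_schemes :: "fm set" where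
  "classical_schemes = {Imp a (Imp (Neg a) b) | a b. True} \<union> {Disj a (Neg a) | a. True}"

abbreviation N4CK_cl :: "fm \<Rightarrow> bool" where "N4CK_cl \<equiv> n4ck classical_schemes"

fun ceval :: "(fm \<Rightarrow> bool) \<Rightarrow> fm \<Rightarrow> bool" where
  "ceval v (Var p) = v (Var p)"
| "ceval v (Cond a b) = v (Cond a b)"
| "ceval v (Conj a b) = (ceval v a \<and> ceval v b)"
| "ceval v (Disj a b) = (ceval v a \<or> ceval v b)"
| "ceval v (Imp a b) = (ceval v a \<longrightarrow> ceval v b)"
| "ceval v (Neg a) = (\<not> ceval v a)"

definition taut :: "fm \<Rightarrow> bool" where
  "taut f \<longleftrightarrow> (\<forall>v. ceval v f)"

inductive ck :: "fm \<Rightarrow> bool" where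
  ax_taut: "taut f \<Longrightarrow> ck f"
| ax_A1: "A1 f \<Longrightarrow> ck f"
| ax_A4: "A4 f \<Longrightarrow> ck f"
| MP: "ck (Imp a b) \<Longrightarrow> ck a \<Longrightarrow> ck b"
| RA: "ck (SIff a b) \<Longrightarrow> ck (SIff (Cond a c) (Cond b c))"
| RC1: "ck (Iff a b) \<Longrightarrow> ck (Iff (Cond c a) (Cond c b))"

inductive derives :: "(fm \<Rightarrow> bool) \<Rightarrow> fm set \<Rightarrow> fm \<Rightarrow> bool" for S :: "fm \<Rightarrow> bool" and \<Gamma> :: "fm set" where
  prem: "f \<in> \<Gamma> \<Longrightarrow> derives S \<Gamma> f"
| theorem_rule: "S f \<Longrightarrow> derives S \<Gamma> f"
| mp: "derives S \<Gamma> (Imp a b) \<Longrightarrow> derives S \<Gamma> a \<Longrightarrow> derives S \<Gamma> b"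

fun bigdisj :: "fm list \<Rightarrow> fm" where
  "bigdisj [] = Conj (Var 1) (Neg (Var 1))"   (* never used: lists are required nonempty *)
| "bigdisj [f] = f"
| "bigdisj (f # fs) = Disj f (bigdisj fs)"

definition cons_rel :: "(fm \<Rightarrow> bool) \<Rightarrow> fm set \<Rightarrow> fm set \<Rightarrow> bool" where
  "cons_rel S \<Gamma> \<Delta> \<longleftrightarrow> (\<exists>fs. fs \<noteq> [] \<and> set fs \<subseteq> \<Delta> \<and> derives S \<Gamma> (bigdisj fs))"

definition iota :: "(fm \<Rightarrow> bool) \<Rightarrow> (fm set \<times> fm set) set" where
  "iota S = {(\<Gamma>, \<Delta>). cons_rel S \<Gamma> \<Delta>}
          \<union> {(\<Gamma>, {}) | \<Gamma>. derives S \<Gamma> (Conj (Var 1) (Neg (Var 1)))}"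

end

theory Submission
  imports Defs
begin

text \<open>
  Reading \<open>\<sim>\<close> classically, every axiom of N4CK is a theorem of CK: the propositional
  ones are tautologies, (A2) and (A3) follow from (A1) and (RC1), and (RC2) reduces to (RC1)
  because \<open>\<sim>a \<leftrightarrow> \<sim>b\<close> is classically equivalent to \<open>a \<leftrightarrow> b\<close>.
  Conversely, adding explosion and excluded middle to N4CK yields all tautologies by
  Kalmar's argument: the De Morgan laws of strong negation let each formula or its
  negation be derived from the literals of its atoms, and excluded middle discharges the
  literals one at a time. Hence CK and the classical extension of N4CK have the same
  theorems, so their \<open>\<iota>\<close>-consequence relations coincide.
\<close>

lemma ck_taut_mp: "ck a \<Longrightarrow> taut (Imp a b) \<Longrightarrow> ck b"
  by (blast intro: ck.MP ck.ax_taut)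

lemma ck_conjI: "ck a \<Longrightarrow> ck b \<Longrightarrow> ck (Conj a b)"
  using ck.MP[OF ck.MP[OF ck.ax_taut[of "Imp a (Imp b (Conj a b))"]]] by (simp add: taut_def)

lemma ck_taut_mp2: "ck a \<Longrightarrow> ck b \<Longrightarrow> taut (Imp (Conj a b) c) \<Longrightarrow> ck c"
  using ck_conjI ck_taut_mp by blast

lemma ck_A1: "ck (SIff (Conj (Cond a b) (Cond a c)) (Cond a (Conj b c)))"
  by (rule ck.ax_A1) (unfold A1_def, blast)

lemma ck_cond_mono:
  assumes "taut (Imp x y)"
  shows "ck (Imp (Cond a x) (Cond a y))"
proof -
  have "taut (Iff x (Conj x y))"
    using assms by (auto simp: taut_def Iff_def)
  then have "ck (Iff (Cond a x) (Cond a (Conj x y)))"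
    by (intro ck.RC1 ck.ax_taut)
  then show ?thesis
    by (rule ck_taut_mp2[OF _ ck_A1[of a x y]])
      (unfold taut_def Iff_def SIff_def SImp_def ceval.simps, blast)
qed

lemma ck_A2:
  assumes "A2 f"
  shows "ck f"
proof -
  obtain a b c where f: "f = Imp (Conj (Neg (Cond a b)) (Cond a c)) (Neg (Cond a (Disj b (Neg c))))"
    using assms by (auto simp: A2_def)
  have "ck (Iff (Cond a (Conj c (Disj b (Neg c)))) (Cond a (Conj b c)))"
    by (intro ck.RC1 ck.ax_taut) (unfold taut_def Iff_def ceval.simps, blast)
  moreover have "ck (Conj (SIff (Conj (Cond a c) (Cond a (Disj b (Neg c))))
                              (Cond a (Conj c (Disj b (Neg c)))))
                        (SIff (Conj (Cond a b) (Cond a c)) (Cond a (Conj b c))))"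
    by (intro ck_conjI ck_A1)
  ultimately show ?thesis
    unfolding f by (rule ck_taut_mp2) (unfold taut_def Iff_def SIff_def SImp_def ceval.simps, blast)
qed

lemma ck_A3:
  assumes "A3 f"
  shows "ck f"
proof -
  obtain a b c where f: "f = Imp (Imp (Might a b) (Cond a c)) (Cond a (Imp b c))"
    using assms by (auto simp: A3_def)
  have "ck (Imp (Cond a (Neg b)) (Cond a (Imp b c)))"
    by (rule ck_cond_mono) (unfold taut_def ceval.simps, blast)
  moreover have "ck (Imp (Cond a c) (Cond a (Imp b c)))"
    by (rule ck_cond_mono) (unfold taut_def ceval.simps, blast)
  ultimately show ?thesis
    unfolding f by (rule ck_taut_mp2) (unfold taut_def Might_def ceval.simps, blast)
qed

lemma ck_RC2:
  assumes "ck (Iff (Neg a) (Neg b))"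
  shows "ck (Iff (Neg (Cond c a)) (Neg (Cond c b)))"
proof -
  have "ck (Iff a b)"
    using assms by (rule ck_taut_mp) (unfold taut_def Iff_def ceval.simps, blast)
  then have "ck (Iff (Cond c a) (Cond c b))"
    by (rule ck.RC1)
  then show ?thesis
    by (rule ck_taut_mp) (unfold taut_def Iff_def ceval.simps, blast)
qed

lemma ck_if_n4ck:
  assumes "n4ck E f" and "\<And>g. g \<in> E \<Longrightarrow> taut g"
  shows "ck f"
  using assms(1)
proof (induction rule: n4ck.induct)
  case (ax_pos f)
  then show ?case
    by (cases rule: pos_ax.cases) (auto intro!: ck.ax_taut simp: taut_def)
next
  case (ax_neg f)
  then show ?case
    by (cases rule: neg_ax.cases) (auto intro!: ck.ax_taut simp: taut_def Iff_def)
next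
  case (ax_extra f)
  then show ?case
    using assms(2) by (blast intro: ck.ax_taut)
qed (auto intro: ck.intros ck_A2 ck_A3 ck_RC2)

fun atoms :: "fm \<Rightarrow> fm set" where
  "atoms (Var p) = {Var p}"
| "atoms (Cond a b) = {Cond a b}"
| "atoms (Conj a b) = atoms a \<union> atoms b"
| "atoms (Disj a b) = atoms a \<union> atoms b"
| "atoms (Imp a b) = atoms a \<union> atoms b"
| "atoms (Neg a) = atoms a"

lemma finite_atoms: "finite (atoms f)"
  by (induction f) auto

definition literal :: "(fm \<Rightarrow> bool) \<Rightarrow> fm \<Rightarrow> fm" where
  "literal v q = (if v q then q else Neg q)"

lemma derives_mono: "derives S H f \<Longrightarrow> H \<subseteq> H' \<Longrightarrow> derives S H' f"
  by (induction rule: derives.induct) (auto intro: derives.intros)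

locale positive_hilbert_system =
  fixes S :: "fm \<Rightarrow> bool"
  assumes pos_ax_thm: "pos_ax f \<Longrightarrow> S f"
begin

lemma derives_pos_ax: "pos_ax f \<Longrightarrow> derives S H f"
  by (intro derives.theorem_rule pos_ax_thm)

lemma derives_weaken: "derives S H b \<Longrightarrow> derives S H (Imp a b)"
  by (meson derives.mp derives_pos_ax pos_ax.K)

lemma derives_imp_refl: "derives S H (Imp a a)"
proof -
  have "derives S H (Imp (Imp a (Imp (Imp a a) a)) (Imp (Imp a (Imp a a)) (Imp a a)))"
    by (intro derives_pos_ax pos_ax.S)
  then show ?thesis
    by (meson derives.mp derives_pos_ax pos_ax.K)
qed

lemma deduction_theorem: "derives S (insert a H) b \<Longrightarrow> derives S H (Imp a b)"
proof (induction rule: derives.induct)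
  case (prem f)
  then show ?case
    by (auto intro: derives_imp_refl derives_weaken derives.prem)
next
  case (theorem_rule f)
  then show ?case
    by (intro derives_weaken derives.theorem_rule)
next
  case (mp x y)
  have "derives S H (Imp (Imp a (Imp x y)) (Imp (Imp a x) (Imp a y)))"
    by (intro derives_pos_ax pos_ax.S)
  then show ?case
    using mp.IH derives.mp by blast
qed

lemma derives_conjI: "derives S H a \<Longrightarrow> derives S H b \<Longrightarrow> derives S H (Conj a b)"
  by (meson derives.mp derives_pos_ax pos_ax.CI)

lemma derives_disjI1: "derives S H a \<Longrightarrow> derives S H (Disj a b)"
  by (meson derives.mp derives_pos_ax pos_ax.D1)

lemma derives_disjI2: "derives S H b \<Longrightarrow> derives S H (Disj a b)"
  by (meson derives.mp derives_pos_ax pos_ax.D2)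

lemma derives_disjE:
  assumes "derives S H (Disj p q)" "derives S (insert p H) f" "derives S (insert q H) f"
  shows "derives S H f"
proof -
  have "derives S H (Imp (Imp p f) (Imp (Imp q f) (Imp (Disj p q) f)))"
    by (intro derives_pos_ax pos_ax.DE)
  then show ?thesis
    using assms deduction_theorem derives.mp by meson
qed

end

locale classical_nelson_system = positive_hilbert_system +
  assumes neg_ax_thm: "neg_ax f \<Longrightarrow> S f"
    and explosion_thm: "S (Imp a (Imp (Neg a) b))"
    and excluded_middle_thm: "S (Disj a (Neg a))"
begin

lemma derives_neg_ax_rev: "neg_ax (Iff x y) \<Longrightarrow> derives S H y \<Longrightarrow> derives S H x"
proof -
  assume "neg_ax (Iff x y)" "derives S H y"
  moreover have "derives S H (Imp (Conj (Imp x y) (Imp y x)) (Imp y x))"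
    by (intro derives_pos_ax pos_ax.C2)
  ultimately show ?thesis
    by (metis Iff_def derives.mp derives.theorem_rule neg_ax_thm)
qed

lemma derives_explosion: "derives S H a \<Longrightarrow> derives S H (Neg a) \<Longrightarrow> derives S H b"
  by (meson derives.mp derives.theorem_rule explosion_thm)

lemma derives_excluded_middle: "derives S H (Disj a (Neg a))"
  by (intro derives.theorem_rule excluded_middle_thm)

lemma kalmar:
  assumes "literal v ` atoms f \<subseteq> H"
  shows "(ceval v f \<longrightarrow> derives S H f) \<and> (\<not> ceval v f \<longrightarrow> derives S H (Neg f))"
  using assms
proof (induction f)
  case (Var p)
  then show ?case
    by (auto simp: literal_def intro: derives.prem split: if_splits)
next
  case (Cond a b)
  then show ?case
    by (auto simp: literal_def intro: derives.prem split: if_splits)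
next
  case (Conj a b)
  then have "(ceval v a \<longrightarrow> derives S H a) \<and> (\<not> ceval v a \<longrightarrow> derives S H (Neg a))"
    and "(ceval v b \<longrightarrow> derives S H b) \<and> (\<not> ceval v b \<longrightarrow> derives S H (Neg b))"
    by auto
  then show ?case
    using derives_neg_ax_rev[OF neg_ax.intros(2)]
    by (auto intro: derives_conjI derives_disjI1 derives_disjI2)
next
  case (Disj a b)
  then have "(ceval v a \<longrightarrow> derives S H a) \<and> (\<not> ceval v a \<longrightarrow> derives S H (Neg a))"
    and "(ceval v b \<longrightarrow> derives S H b) \<and> (\<not> ceval v b \<longrightarrow> derives S H (Neg b))"
    by auto
  then show ?case
    using derives_neg_ax_rev[OF neg_ax.intros(3)]
    by (auto intro: derives_conjI derives_disjI1 derives_disjI2)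
next
  case (Imp a b)
  then have IHa: "(ceval v a \<longrightarrow> derives S H a) \<and> (\<not> ceval v a \<longrightarrow> derives S H (Neg a))"
    and IHb: "(ceval v b \<longrightarrow> derives S H b) \<and> (\<not> ceval v b \<longrightarrow> derives S H (Neg b))"
    by auto
  have "derives S H (Imp a b)" if "\<not> ceval v a"
  proof -
    have "derives S (insert a H) (Neg a)"
      using IHa that by (auto intro: derives_mono)
    then have "derives S (insert a H) b"
      by (blast intro: derives_explosion derives.prem)
    then show ?thesis
      by (rule deduction_theorem)
  qed
  then show ?case
    using IHa IHb derives_neg_ax_rev[OF neg_ax.intros(4)]
    by (auto intro: derives_conjI derives_weaken)
next
  case (Neg a)
  then show ?case
    using derives_neg_ax_rev[OF neg_ax.intros(1)] by auto
qed

lemma discharge_literals: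
  assumes "finite A" and "\<And>v. derives S (literal v ` (A \<union> B)) f"
  shows "derives S (literal v ` B) f"
  using assms
proof (induction A arbitrary: B v rule: finite_induct)
  case empty
  then show ?case by simp
next
  case (insert p A)
  then have IH: "\<And>v. derives S (literal v ` insert p B) f"
    by (metis Un_insert_left Un_insert_right)
  show ?case
  proof (cases "p \<in> B")
    case True
    then show ?thesis
      using IH by (simp add: insert_absorb)
  next
    case False
    then have "literal (v(p := t)) ` B = literal v ` B" for t
      by (auto simp: literal_def)
    then have "derives S (insert p (literal v ` B)) f" "derives S (insert (Neg p) (literal v ` B)) f"
      using IH[of "v(p := True)"] IH[of "v(p := False)"] by (simp_all add: literal_def)
    then show ?thesis
      using derives_disjE derives_excluded_middle by blast
  qed
qed

theorem derives_taut:
  assumes "taut f"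
  shows "derives S {} f"
proof -
  have "derives S (literal v ` (atoms f \<union> {})) f" for v
    using assms kalmar[of v f] by (simp add: taut_def)
  then show ?thesis
    using discharge_literals[OF finite_atoms] by (metis image_empty)
qed

end

lemma n4ck_if_derives_empty: "derives (n4ck E) {} f \<Longrightarrow> n4ck E f"
  by (induction rule: derives.induct) (auto intro: n4ck.MP)

interpretation N4CK_cl: classical_nelson_system N4CK_cl
  by unfold_locales (auto intro: n4ck.intros simp: classical_schemes_def)

lemma N4CK_cl_eq_ck: "N4CK_cl = ck"
proof (intro ext iffI)
  fix f
  assume "N4CK_cl f"
  then show "ck f"
    by (rule ck_if_n4ck) (auto simp: classical_schemes_def taut_def)
next
  fix f
  assume "ck f"
  then show "N4CK_cl f"
  proof (induction rule: ck.induct)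
    case (ax_taut f)
    then show ?case
      by (intro n4ck_if_derives_empty N4CK_cl.derives_taut)
  qed (auto intro: n4ck.intros)
qed

theorem proposition8:
  shows "(\<forall>f. N4CK f \<longrightarrow> ck f) \<and> iota ck = iota N4CK_cl"
  using ck_if_n4ck[of "{}"] N4CK_cl_eq_ck by auto

end
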